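(* Let $(X,d)$ be a bounded metric space and let $M: X\to\mathbb{R}$ satisfy $d(x,y)\le M(x)\le d(x,z)+M(z)$ for all $x,y,z\in X$. Let $d_S$ be the subset distance on $\mathcal{F}(X)$ defined in the context. Then for any $X_1,X_2\in\mathcal{F}(X)$, $d_S(X_1,X_2)=d_S(X_1\setminus X_2,\,X_2\setminus X_1)$.
   Context: $\mathcal{F}(X)$ denotes the set of all finite subsets of $X$ (including the empty set). For $A,B\in\mathcal{F}(X)$ with $|A|\le|B|$ and an injection $\chi:A\to B$, define $d_\chi(A,B)=\sum_{x\in A} d(x,\chi(x))+\sum_{y\in B\setminus\chi(A)} M(y)$. The subset distance is $d_S(A,B)=d_S(B,A)=\min\{d_\chi(A,B) : \chi:A\to B \text{ an injection}\}$ (for $|A|\le|B|$). *)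

theory Defs
  imports "HOL-Analysis.Analysis"
begin

definition d_chi :: "('a \<Rightarrow> 'a \<Rightarrow> real) \<Rightarrow> ('a \<Rightarrow> real) \<Rightarrow> ('a \<Rightarrow> 'a) \<Rightarrow> 'a set \<Rightarrow> 'a set \<Rightarrow> real" where
  "d_chi d M chi A B = (\<Sum>x\<in>A. d x (chi x)) + (\<Sum>y\<in>B - chi ` A. M y)"

text \<open>Minimum over injections A \<rightarrow> B (meaningful when card A \<le> card B).\<close>
definition d_S_le :: "('a \<Rightarrow> 'a \<Rightarrow> real) \<Rightarrow> ('a \<Rightarrow> real) \<Rightarrow> 'a set \<Rightarrow> 'a set \<Rightarrow> real" where
  "d_S_le d M A B = Min {d_chi d M chi A B | chi. inj_on chi A \<and> chi ` A \<subseteq> B}"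

definition d_S :: "('a \<Rightarrow> 'a \<Rightarrow> real) \<Rightarrow> ('a \<Rightarrow> real) \<Rightarrow> 'a set \<Rightarrow> 'a set \<Rightarrow> real" where
  "d_S d M A B = (if card A \<le> card B then d_S_le d M A B else d_S_le d M B A)"

end

theory Submission
  imports Defs
begin

(* The cost of an injection chi from A into B is the total penalty of B plus the excess, the
   sum over x in A of d x (chi x) - M (chi x). Removing a common point z of A and B lowers the
   penalty by M z, and some injection on A - {z} has excess at most that of chi plus M z:
   if chi fixes z, restrict chi; if chi u = z, send u to chi z instead (triangle inequality);
   if z is not hit, drop z, freeing chi z at a price covered by M (chi z) \<le> d z (chi z) + M z.
   Removing the points of A \<inter> B one at a time therefore does not increase the minimum, and
   conversely an injection from A - B into B - A extends by the identity on A \<inter> B at the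
   same cost. *)

lemma finite_d_chi_values:
  assumes "finite A" and "finite B"
  shows "finite {d_chi d M chi A B | chi. inj_on chi A \<and> chi ` A \<subseteq> B}"
proof (rule finite_subset)
  show "{d_chi d M chi A B | chi. inj_on chi A \<and> chi ` A \<subseteq> B}
      \<subseteq> (\<lambda>f. d_chi d M f A B) ` (A \<rightarrow>\<^sub>E B)"
  proof clarify
    fix chi assume "chi ` A \<subseteq> B"
    then have "restrict chi A \<in> A \<rightarrow>\<^sub>E B" by auto
    moreover have "d_chi d M chi A B = d_chi d M (restrict chi A) A B"
      by (simp add: d_chi_def)
    ultimately show "d_chi d M chi A B \<in> (\<lambda>f. d_chi d M f A B) ` (A \<rightarrow>\<^sub>E B)"
      by blast
  qed
  show "finite ((\<lambda>f. d_chi d M f A B) ` (A \<rightarrow>\<^sub>E B))"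
    using assms by (simp add: finite_PiE)
qed

definition match_excess :: "('a \<Rightarrow> 'a \<Rightarrow> real) \<Rightarrow> ('a \<Rightarrow> real) \<Rightarrow> ('a \<Rightarrow> 'a) \<Rightarrow> 'a set \<Rightarrow> real"
  where "match_excess d M chi A = (\<Sum>x\<in>A. d x (chi x) - M (chi x))"

lemma d_chi_eq_sum_plus_match_excess:
  assumes "finite B" and "inj_on chi A" and "chi ` A \<subseteq> B"
  shows "d_chi d M chi A B = (\<Sum>y\<in>B. M y) + match_excess d M chi A"
proof -
  have "(\<Sum>y\<in>B - chi ` A. M y) = (\<Sum>y\<in>B. M y) - (\<Sum>x\<in>A. M (chi x))"
    using assms by (simp add: sum_diff sum.reindex)
  then show ?thesis
    unfolding d_chi_def match_excess_def by (simp add: sum_subtractf)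
qed

lemma Min_eq_Min_dominating_subset:
  fixes S :: "'a::linorder set"
  assumes "finite S" and "T \<subseteq> S" and "T \<noteq> {}" and "\<And>s. s \<in> S \<Longrightarrow> \<exists>t\<in>T. t \<le> s"
  shows "Min S = Min T"
proof (rule antisym)
  show "Min S \<le> Min T"
    using assms(1-3) by (rule Min_antimono[rotated 2])
  have "finite T"
    using assms(1,2) by (rule finite_subset[rotated])
  obtain t where "t \<in> T" "t \<le> Min S"
    using assms Min_in by (metis subset_empty)
  then show "Min T \<le> Min S"
    using \<open>finite T\<close> by (meson Min_le order_trans)
qed

lemma card_le_iff_card_Diff_le:
  assumes "finite A" and "finite B"
  shows "card A \<le> card B \<longleftrightarrow> card (A - B) \<le> card (B - A)"
proof -
  have "card (A - B) = card A - card (A \<inter> B)" "card (B - A) = card B - card (A \<inter> B)"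
    using assms by (simp_all add: card_Diff_subset_Int Int_commute)
  moreover have "card (A \<inter> B) \<le> card A" "card (A \<inter> B) \<le> card B"
    using assms by (simp_all add: card_mono)
  ultimately show ?thesis by linarith
qed

locale lipschitz_penalty_metric = Metric_space X d for X :: "'a set" and d +
  fixes M :: "'a \<Rightarrow> real"
  assumes penalty_le_dist_plus: "x \<in> X \<Longrightarrow> z \<in> X \<Longrightarrow> M x \<le> d x z + M z"
begin

lemma exists_injection_Diff_common_point_match_excess:
  assumes "finite A" and "A \<subseteq> X" and "B \<subseteq> X" and "z \<in> A" and "z \<in> B"
    and inj: "inj_on chi A" and im: "chi ` A \<subseteq> B"
  shows "\<exists>chi'. inj_on chi' (A - {z}) \<and> chi' ` (A - {z}) \<subseteq> B - {z} \<and>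
           match_excess d M chi' (A - {z}) \<le> match_excess d M chi A + M z"
proof -
  define w where "w = chi z"
  have excess_A: "match_excess d M chi A = d z w - M w + match_excess d M chi (A - {z})"
    using assms(1,4) by (simp add: match_excess_def w_def sum.remove)
  have X: "w \<in> X" "z \<in> X"
    using assms im unfolding w_def by auto
  have inj_Diff: "inj_on chi (A - {z})"
    using inj by (rule inj_on_subset) auto
  consider "w = z" | u where "u \<in> A" "u \<noteq> z" "chi u = z" | "z \<notin> chi ` A"
    using inj unfolding w_def by (metis image_iff)
  then show ?thesis
  proof cases
    case 1
    then have "chi ` (A - {z}) \<subseteq> B - {z}"
      using inj im assms(4) unfolding w_def by (auto simp: inj_on_def)
    then show ?thesis
      using inj_Diff excess_A 1 X by (intro exI[of _ chi]) simp
  next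
    case 2
    define chi' where "chi' = chi(u := w)"
    have "inj_on chi' (A - {z})" and "chi' ` (A - {z}) \<subseteq> B - {z}"
      using inj 2 im assms(4) unfolding chi'_def w_def inj_on_def by auto
    moreover have "match_excess d M chi' (A - {z}) = d u w - M w + match_excess d M chi (A - {z} - {u})"
      using assms(1) 2 by (simp add: match_excess_def sum.remove chi'_def)
    moreover have "match_excess d M chi (A - {z}) = d u z - M z + match_excess d M chi (A - {z} - {u})"
      using assms(1) 2 by (simp add: match_excess_def sum.remove)
    moreover have "d u w \<le> d u z + d z w"
      using triangle 2 X assms(2) by blast
    ultimately show ?thesis
      using excess_A by (intro exI[of _ chi']) simp
  next
    case 3
    then have "chi ` (A - {z}) \<subseteq> B - {z}"
      using im by auto
    moreover have "M w \<le> d z w + M z"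
      using penalty_le_dist_plus[OF X] commute by simp
    ultimately show ?thesis
      using inj_Diff excess_A by (intro exI[of _ chi]) simp
  qed
qed

lemma exists_injection_Diff_common_point:
  assumes "finite B" and "A \<subseteq> X" and "B \<subseteq> X" and "z \<in> A" and "z \<in> B"
    and inj: "inj_on chi A" and im: "chi ` A \<subseteq> B"
  shows "\<exists>chi'. inj_on chi' (A - {z}) \<and> chi' ` (A - {z}) \<subseteq> B - {z} \<and>
           d_chi d M chi' (A - {z}) (B - {z}) \<le> d_chi d M chi A B"
proof -
  have "finite A"
    using assms(1) inj im finite_image_iff finite_subset by metis
  then obtain chi' where chi': "inj_on chi' (A - {z})" "chi' ` (A - {z}) \<subseteq> B - {z}"
    and "match_excess d M chi' (A - {z}) \<le> match_excess d M chi A + M z"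
    using exists_injection_Diff_common_point_match_excess[OF _ assms(2-7)] by blast
  moreover have "(\<Sum>y\<in>B - {z}. M y) = (\<Sum>y\<in>B. M y) - M z"
    using assms(1,5) by (simp add: sum_diff1)
  ultimately have "d_chi d M chi' (A - {z}) (B - {z}) \<le> d_chi d M chi A B"
    using d_chi_eq_sum_plus_match_excess[OF assms(1) inj im, of d M]
      d_chi_eq_sum_plus_match_excess[of "B - {z}" chi' "A - {z}" d M] assms(1)
    by simp
  with chi' show ?thesis
    by blast
qed

lemma exists_injection_Diff_Diff:
  assumes "finite B" and "A \<subseteq> X" and "B \<subseteq> X" and "inj_on chi A" and "chi ` A \<subseteq> B"
  shows "\<exists>psi. inj_on psi (A - B) \<and> psi ` (A - B) \<subseteq> B - A \<and>
           d_chi d M psi (A - B) (B - A) \<le> d_chi d M chi A B"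
  using assms
proof (induction "card (A \<inter> B)" arbitrary: A B chi rule: less_induct)
  case less
  show ?case
  proof (cases "A \<inter> B = {}")
    case True
    then have "A - B = A" "B - A = B" by auto
    then show ?thesis using less.prems by auto
  next
    case False
    then obtain z where z: "z \<in> A" "z \<in> B" by auto
    obtain chi' where chi': "inj_on chi' (A - {z})" "chi' ` (A - {z}) \<subseteq> B - {z}"
      and cheaper: "d_chi d M chi' (A - {z}) (B - {z}) \<le> d_chi d M chi A B"
      using exists_injection_Diff_common_point[OF less.prems(1-3) z less.prems(4,5)] by blast
    have "(A - {z}) \<inter> (B - {z}) = A \<inter> B - {z}"
      by auto
    then have "card ((A - {z}) \<inter> (B - {z})) < card (A \<inter> B)"
      using z less.prems(1) by (metis IntI card_Diff1_less finite_Int)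
    moreover have "finite (B - {z})" "A - {z} \<subseteq> X" "B - {z} \<subseteq> X"
      using less.prems(1-3) by auto
    ultimately obtain psi where
      "inj_on psi (A - {z} - (B - {z}))" "psi ` (A - {z} - (B - {z})) \<subseteq> B - {z} - (A - {z})"
      "d_chi d M psi (A - {z} - (B - {z})) (B - {z} - (A - {z})) \<le> d_chi d M chi' (A - {z}) (B - {z})"
      using less.hyps chi' by blast
    moreover have "A - {z} - (B - {z}) = A - B" "B - {z} - (A - {z}) = B - A"
      using z by auto
    ultimately show ?thesis
      using cheaper by (metis order_trans)
  qed
qed

lemma d_chi_extend_by_identity:
  assumes "finite A" and "A \<subseteq> X" and inj: "inj_on psi (A - B)" and im: "psi ` (A - B) \<subseteq> B - A"
  defines "chi \<equiv> \<lambda>x. if x \<in> B then x else psi x"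
  shows "inj_on chi A" and "chi ` A \<subseteq> B"
    and "d_chi d M chi A B = d_chi d M psi (A - B) (B - A)"
proof -
  show "inj_on chi A"
    using inj im unfolding chi_def inj_on_def by (metis DiffI DiffD2 image_subset_iff)
  have img: "chi ` A = psi ` (A - B) \<union> (A \<inter> B)"
    by (auto simp: chi_def)
  then show "chi ` A \<subseteq> B"
    using im by auto
  have "(\<Sum>x\<in>A. d x (chi x)) = (\<Sum>x\<in>A \<inter> B. d x (chi x)) + (\<Sum>x\<in>A - B. d x (chi x))"
    using assms(1) by (rule sum.Int_Diff)
  also have "(\<Sum>x\<in>A \<inter> B. d x (chi x)) = 0"
    using assms(2) by (intro sum.neutral) (auto simp: chi_def)
  also have "(\<Sum>x\<in>A - B. d x (chi x)) = (\<Sum>x\<in>A - B. d x (psi x))"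
    by (auto simp: chi_def intro: sum.cong)
  moreover have "B - chi ` A = B - A - psi ` (A - B)"
    using img by auto
  ultimately show "d_chi d M chi A B = d_chi d M psi (A - B) (B - A)"
    by (simp add: d_chi_def)
qed

lemma d_S_le_Diff_Diff:
  assumes "finite A" and "finite B" and "A \<subseteq> X" and "B \<subseteq> X"
    and "card (A - B) \<le> card (B - A)"
  shows "d_S_le d M A B = d_S_le d M (A - B) (B - A)"
proof -
  let ?S = "{d_chi d M chi A B | chi. inj_on chi A \<and> chi ` A \<subseteq> B}"
  let ?T = "{d_chi d M psi (A - B) (B - A) | psi. inj_on psi (A - B) \<and> psi ` (A - B) \<subseteq> B - A}"
  have "?T \<subseteq> ?S"
  proof clarify
    fix psi assume "inj_on psi (A - B)" and "psi ` (A - B) \<subseteq> B - A"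
    then show "\<exists>chi. d_chi d M psi (A - B) (B - A) = d_chi d M chi A B \<and>
        inj_on chi A \<and> chi ` A \<subseteq> B"
      using d_chi_extend_by_identity[OF assms(1,3)]
      by (intro exI[of _ "\<lambda>x. if x \<in> B then x else psi x"]) simp
  qed
  moreover obtain psi where "inj_on psi (A - B)" and "psi ` (A - B) \<subseteq> B - A"
    using card_le_inj[OF _ _ assms(5)] assms(1,2) by blast
  then have "?T \<noteq> {}"
    by blast
  moreover have "\<exists>t\<in>?T. t \<le> s" if "s \<in> ?S" for s
  proof -
    obtain chi where s: "s = d_chi d M chi A B" and chi: "inj_on chi A" "chi ` A \<subseteq> B"
      using \<open>s \<in> ?S\<close> by blast
    obtain psi where "inj_on psi (A - B)" "psi ` (A - B) \<subseteq> B - A"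
      and "d_chi d M psi (A - B) (B - A) \<le> d_chi d M chi A B"
      using exists_injection_Diff_Diff[OF assms(2-4) chi] by blast
    then show ?thesis
      unfolding s by blast
  qed
  ultimately show ?thesis
    unfolding d_S_le_def by (rule Min_eq_Min_dominating_subset[OF finite_d_chi_values[OF assms(1,2)]])
qed

lemma d_S_Diff_Diff:
  assumes "finite A" and "finite B" and "A \<subseteq> X" and "B \<subseteq> X"
  shows "d_S d M A B = d_S d M (A - B) (B - A)"
proof (cases "card A \<le> card B")
  case True
  then have "card (A - B) \<le> card (B - A)"
    using card_le_iff_card_Diff_le assms(1,2) by blast
  then show ?thesis
    using True d_S_le_Diff_Diff[OF assms] by (simp add: d_S_def)
next
  case False
  then have "card (B - A) \<le> card (A - B)" "\<not> card (A - B) \<le> card (B - A)"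
    using card_le_iff_card_Diff_le[OF assms(1,2)] card_le_iff_card_Diff_le[OF assms(2,1)]
    by linarith+
  then show ?thesis
    using False d_S_le_Diff_Diff[OF assms(2,1,4,3)] by (simp add: d_S_def)
qed

end

theorem corollary2p2:
  fixes X :: "'a set" and d :: "'a \<Rightarrow> 'a \<Rightarrow> real" and M :: "'a \<Rightarrow> real"
    and X1 X2 :: "'a set"
  assumes "Metric_space X d"
    and "Metric_space.mbounded X d X"
    and "\<And>x y z. x \<in> X \<Longrightarrow> y \<in> X \<Longrightarrow> z \<in> X \<Longrightarrow> d x y \<le> M x \<and> M x \<le> d x z + M z"
    and "finite X1" and "X1 \<subseteq> X"
    and "finite X2" and "X2 \<subseteq> X"
  shows "d_S d M X1 X2 = d_S d M (X1 - X2) (X2 - X1)"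
proof -
  have "lipschitz_penalty_metric X d M"
    using assms(1,3) by (simp add: lipschitz_penalty_metric_def lipschitz_penalty_metric_axioms_def)
  then show ?thesis
    using assms(4,6,5,7) by (rule lipschitz_penalty_metric.d_S_Diff_Diff)
qed

end
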